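(* Let $T$ be a tree on $n\ge2$ vertices, $k\ge2$ even, and $M$ the order-$k$ Steiner distance hypermatrix of $T$. For every $\mathbf{c}\in\mathcal{H}_n$, writing $\alpha'_e=\mathbf{c}^T\mathbf{a}'_e$ for $e\in E(T)$, $$M(\mathbf{c},\ldots,\mathbf{c})=-2\sum_{e\in E(T)}(\alpha'_e)^k.$$
   Context: $T$ is a tree with vertex set $\{1,\dots,n\}$ and edge set $E(T)$. For $U\subseteq V(T)$, the Steiner distance $S(U)$ is the minimum number of edges of a connected subgraph of $T$ whose vertex set contains $U$. The order-$k$ Steiner distance hypermatrix $M$ of $T$ has entries $M_{(i_1,\dots,i_k)}=S(\{i_1,\dots,i_k\})$, and $M(\mathbf{x}_1,\dots,\mathbf{x}_k)=\sum_{\mathbf{i}\in V(T)^k}M_{\mathbf{i}}\prod_{j=1}^k x_{j i_j}$. For an edge $e$, $A(e)$ and $B(e)$ are the vertex sets of the two components of $T-e$ (labeled arbitrarily), $\mathbf{a}_e$ is the indicator vector of $A(e)$, $\mathbb{J}$ is the all-ones vector in $\mathbb{R}^n$, and $\mathbf{a}'_e=\mathbf{a}_e-\frac{|A(e)|}{n}\mathbb{J}$. $\mathcal{H}_n=\{\mathbf{c}\in\mathbb{R}^n:\mathbf{c}^T\mathbb{J}=0\}$. *)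

theory Defs
  imports Complex_Main "HOL-Library.FuncSet"
begin

(* Graphs on the vertex set {1..n}: an edge is a 2-element subset of {1..n}. *)

definition adj :: "nat set set \<Rightarrow> nat \<Rightarrow> nat \<Rightarrow> bool" where
  "adj E x y \<longleftrightarrow> {x, y} \<in> E"

definition connected_graph :: "nat set \<Rightarrow> nat set set \<Rightarrow> bool" where
  "connected_graph V E \<longleftrightarrow> (\<forall>x\<in>V. \<forall>y\<in>V. (adj E)\<^sup>*\<^sup>* x y)"

definition is_cycle :: "nat set set \<Rightarrow> nat list \<Rightarrow> bool" where
  "is_cycle E vs \<longleftrightarrow> length vs \<ge> 3 \<and> distinct vs \<and>
     (\<forall>i. Suc i < length vs \<longrightarrow> {vs ! i, vs ! Suc i} \<in> E) \<and> {last vs, hd vs} \<in> E"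

definition is_tree :: "nat \<Rightarrow> nat set set \<Rightarrow> bool" where
  "is_tree n E \<longleftrightarrow> (\<forall>e\<in>E. card e = 2 \<and> e \<subseteq> {1..n})
      \<and> connected_graph {1..n} E \<and> (\<nexists>vs. is_cycle E vs)"

definition steiner_dist :: "nat \<Rightarrow> nat set set \<Rightarrow> nat set \<Rightarrow> nat" where
  "steiner_dist n E U = Min {card E' | E' V'. U \<subseteq> V' \<and> V' \<subseteq> {1..n} \<and> E' \<subseteq> E
       \<and> (\<forall>e\<in>E'. e \<subseteq> V') \<and> connected_graph V' E'}"

(* M(x_1,...,x_k) for the order-k Steiner distance hypermatrix; index tuples are
   functions {0..<k} -> {1..n} *)
definition steiner_form :: "nat \<Rightarrow> nat set set \<Rightarrow> nat \<Rightarrow> (nat \<Rightarrow> nat \<Rightarrow> real) \<Rightarrow> real" where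
  "steiner_form n E k x = (\<Sum>i \<in> {0..<k} \<rightarrow>\<^sub>E {1..n}.
      real (steiner_dist n E (i ` {0..<k})) * (\<Prod>j<k. x j (i j)))"

(* A(e): vertex set of one component of T - e (the one containing the smaller endpoint) *)
definition compA :: "nat \<Rightarrow> nat set set \<Rightarrow> nat set \<Rightarrow> nat set" where
  "compA n E e = {v \<in> {1..n}. (adj (E - {e}))\<^sup>*\<^sup>* (Min e) v}"

(* a'_e = a_e - |A(e)|/n J, as a function on {1..n} *)
definition a_prime :: "nat \<Rightarrow> nat set set \<Rightarrow> nat set \<Rightarrow> nat \<Rightarrow> real" where
  "a_prime n E e v = (if v \<in> compA n E e then 1 else 0) - real (card (compA n E e)) / real n"

end

theory Submission
  imports Defs
begin

(* In a tree, every connected subgraph containing U uses each edge e that separates U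
   (U meets both A(e) and B(e)), and a minimal one uses no other edge: a non-separating edge
   can be deleted, keeping the component that contains U. So S(U) is the number of edges
   separating U, and exchanging the sums gives M(c,...,c) as the sum over e of the sums of
   c_{i_1} ... c_{i_k} over the tuples i meeting both A(e) and B(e). By inclusion-exclusion
   that inner sum is (sum_V c)^k - (sum_A c)^k - (sum_B c)^k, which is -2 (alpha'_e)^k because
   sum_V c = 0, sum_B c = - sum_A c = - alpha'_e and k is even. *)

lemma adj_commute: "adj E x y = adj E y x"
  by (simp add: adj_def insert_commute)

lemma rtranclp_adj_sym: "(adj E)\<^sup>*\<^sup>* x y \<Longrightarrow> (adj E)\<^sup>*\<^sup>* y x"
  by (metis adj_commute symp_rtranclp sympD sympI)

lemma rtranclp_adj_mono: "(adj E')\<^sup>*\<^sup>* x y \<Longrightarrow> E' \<subseteq> E \<Longrightarrow> (adj E)\<^sup>*\<^sup>* x y"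
  by (metis adj_def mono_rtranclp subsetD)

lemma rtranclp_imp_distinct_walk:
  "P\<^sup>*\<^sup>* x y \<Longrightarrow> \<exists>vs. vs \<noteq> [] \<and> hd vs = x \<and> last vs = y \<and> distinct vs \<and> successively P vs"
proof (induction rule: converse_rtranclp_induct)
  case base
  show ?case by (intro exI[of _ "[y]"]) auto
next
  case (step x z)
  then obtain vs where vs: "vs \<noteq> []" "hd vs = z" "last vs = y" "distinct vs" "successively P vs"
    by blast
  show ?case
  proof (cases "x \<in> set vs")
    case True
    then obtain ys zs where "vs = ys @ x # zs" by (meson split_list)
    with vs show ?thesis
      by (intro exI[of _ "x # zs"]) (auto simp: successively_append_iff)
  next
    case False
    with vs step(1) show ?thesis
      by (intro exI[of _ "x # vs"]) (auto simp: successively_Cons)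
  qed
qed

lemma acyclic_edge_is_bridge:
  assumes acyclic: "\<nexists>vs. is_cycle E vs" and ab: "{a, b} \<in> E" "a \<noteq> b"
  shows "\<not> (adj (E - {{a, b}}))\<^sup>*\<^sup>* a b"
proof
  assume "(adj (E - {{a, b}}))\<^sup>*\<^sup>* a b"
  then obtain vs where vs: "vs \<noteq> []" "hd vs = a" "last vs = b" "distinct vs"
    and walk: "successively (adj (E - {{a, b}})) vs"
    using rtranclp_imp_distinct_walk by metis
  have "length vs \<noteq> 1"
    using vs ab by (auto simp: length_Suc_conv)
  moreover have "length vs \<noteq> 2"
  proof
    assume "length vs = 2"
    then obtain p q where "vs = [p, q]"
      by (auto simp: length_Suc_conv numeral_2_eq_2)
    with vs walk show False by (simp add: adj_def)
  qed
  moreover have "length vs \<noteq> 0"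
    using vs(1) by simp
  ultimately have "length vs \<ge> 3"
    by linarith
  moreover have "{vs ! i, vs ! Suc i} \<in> E" if "Suc i < length vs" for i
    using successively_nth[OF walk that] by (simp add: adj_def)
  moreover have "{last vs, hd vs} \<in> E"
    using vs ab by (simp add: insert_commute)
  ultimately have "is_cycle E vs"
    using vs by (simp add: is_cycle_def)
  with acyclic show False by blast
qed

lemma rtranclp_adj_remove_edge:
  assumes "(adj E)\<^sup>*\<^sup>* x y"
  shows "(adj (E - {{a, b}}))\<^sup>*\<^sup>* x y
    \<or> ((adj (E - {{a, b}}))\<^sup>*\<^sup>* x a \<and> (adj (E - {{a, b}}))\<^sup>*\<^sup>* b y)
    \<or> ((adj (E - {{a, b}}))\<^sup>*\<^sup>* x b \<and> (adj (E - {{a, b}}))\<^sup>*\<^sup>* a y)"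
  using assms
proof (induction rule: rtranclp_induct)
  case base
  show ?case by simp
next
  case (step y z)
  show ?case
  proof (cases "{y, z} = {a, b}")
    case False
    then have "adj (E - {{a, b}}) y z" using step(2) by (simp add: adj_def)
    then show ?thesis using step(3) by (meson rtranclp.rtrancl_into_rtrancl)
  next
    case True
    then have "(y = a \<and> z = b) \<or> (y = b \<and> z = a)" by (metis doubleton_eq_iff)
    with step(3) show ?thesis by auto
  qed
qed

lemma compA_subset: "compA n E e \<subseteq> {1..n}"
  unfolding compA_def by blast

lemma mem_compA_iff: "v \<in> {1..n} \<Longrightarrow> v \<in> compA n E e \<longleftrightarrow> (adj (E - {e}))\<^sup>*\<^sup>* (Min e) v"
  unfolding compA_def by blast

lemma tree_walk_avoids_nonseparating_edge:
  assumes tree: "is_tree n E" and e: "e \<in> E'" "E' \<subseteq> E"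
    and xy: "x \<in> {1..n}" "y \<in> {1..n}" "x \<in> compA n E e \<longleftrightarrow> y \<in> compA n E e"
    and walk: "(adj E')\<^sup>*\<^sup>* x y"
  shows "(adj (E' - {e}))\<^sup>*\<^sup>* x y"
proof -
  let ?R = "(adj (E' - {e}))\<^sup>*\<^sup>*" and ?RE = "(adj (E - {e}))\<^sup>*\<^sup>*"
  have "card e = 2" using tree e unfolding is_tree_def by blast
  then obtain p q where "e = {p, q}" "p \<noteq> q" by (meson card_2_iff)
  then have eb: "e = {Min e, Max e}" "Min e \<noteq> Max e"
    by (auto simp: min_def max_def insert_commute)
  have bridge: "\<not> ?RE (Min e) (Max e)"
    using acyclic_edge_is_bridge[of E "Min e" "Max e"] tree e eb unfolding is_tree_def by auto
  have R_RE: "?RE u w" if "?R u w" for u w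
    using rtranclp_adj_mono[OF that] e(2) by blast
  have side: "?RE (Min e) x \<longleftrightarrow> ?RE (Min e) y"
    using xy mem_compA_iff by blast
  from rtranclp_adj_remove_edge[OF walk, of "Min e" "Max e", folded eb(1)] show ?thesis
  proof (elim disjE conjE)
    assume "?R x (Min e)" "?R (Max e) y"
    then have "?RE (Min e) x" "?RE (Max e) y" using R_RE rtranclp_adj_sym by blast+
    with side bridge show ?thesis by (meson rtranclp_adj_sym rtranclp_trans)
  next
    assume "?R x (Max e)" "?R (Min e) y"
    then have "?RE x (Max e)" "?RE (Min e) y" using R_RE by blast+
    with side bridge show ?thesis by (meson rtranclp_adj_sym rtranclp_trans)
  qed
qed

lemma tree_finite_edges: "is_tree n E \<Longrightarrow> finite E"
  unfolding is_tree_def by (metis Pow_iff finite_Pow_iff finite_atLeastAtMost finite_subset subsetI)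

definition separating_edges :: "nat \<Rightarrow> nat set set \<Rightarrow> nat set \<Rightarrow> nat set set" where
  "separating_edges n E U = {e \<in> E. U \<inter> compA n E e \<noteq> {} \<and> \<not> U \<subseteq> compA n E e}"

definition steiner_subgraph :: "nat \<Rightarrow> nat set set \<Rightarrow> nat set \<Rightarrow> nat set set \<Rightarrow> nat set \<Rightarrow> bool" where
  "steiner_subgraph n E U E' V' \<longleftrightarrow> U \<subseteq> V' \<and> V' \<subseteq> {1..n} \<and> E' \<subseteq> E
       \<and> (\<forall>e\<in>E'. e \<subseteq> V') \<and> connected_graph V' E'"

lemma steiner_subgraph_contains_separating_edges:
  assumes U: "U \<subseteq> {1..n}" and sub: "steiner_subgraph n E U E' V'"
  shows "separating_edges n E U \<subseteq> E'"
proof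
  fix e assume "e \<in> separating_edges n E U"
  then obtain x y where xy: "e \<in> E" "x \<in> U" "x \<in> compA n E e" "y \<in> U" "y \<notin> compA n E e"
    unfolding separating_edges_def by blast
  show "e \<in> E'"
  proof (rule ccontr)
    assume "e \<notin> E'"
    with sub have "E' \<subseteq> E - {e}" unfolding steiner_subgraph_def by blast
    moreover have "(adj E')\<^sup>*\<^sup>* x y"
      using sub xy unfolding steiner_subgraph_def connected_graph_def by blast
    ultimately have "(adj (E - {e}))\<^sup>*\<^sup>* x y" by (rule rtranclp_adj_mono[rotated])
    moreover have "(adj (E - {e}))\<^sup>*\<^sup>* (Min e) x" using xy U mem_compA_iff by blast
    ultimately have "(adj (E - {e}))\<^sup>*\<^sup>* (Min e) y" by (meson rtranclp_trans)
    then show False using xy U mem_compA_iff by blast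
  qed
qed

lemma rtranclp_adj_component:
  assumes "(adj F)\<^sup>*\<^sup>* u x" "\<forall>f\<in>F. f \<subseteq> V" "u \<in> V"
  shows "(adj {f \<in> F. f \<subseteq> {v \<in> V. (adj F)\<^sup>*\<^sup>* u v}})\<^sup>*\<^sup>* u x"
  using assms(1)
proof (induction rule: rtranclp_induct)
  case base
  show ?case by simp
next
  case (step y z)
  then have "{y, z} \<in> F" by (simp add: adj_def)
  moreover have "{y, z} \<subseteq> {v \<in> V. (adj F)\<^sup>*\<^sup>* u v}"
    using assms(2,3) step(1,2) calculation by (auto intro: rtranclp.rtrancl_into_rtrancl)
  ultimately have "adj {f \<in> F. f \<subseteq> {v \<in> V. (adj F)\<^sup>*\<^sup>* u v}} y z"
    by (simp add: adj_def)
  with step(3) show ?case by (meson rtranclp.rtrancl_into_rtrancl)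
qed

lemma tree_steiner_subgraph_prune:
  assumes tree: "is_tree n E" and U: "U \<subseteq> {1..n}" "U \<noteq> {}"
    and sub: "steiner_subgraph n E U E' V'" and e: "e \<in> E'" "e \<notin> separating_edges n E U"
    and fin: "finite E'"
  obtains E'' V'' where "steiner_subgraph n E U E'' V''" "card E'' < card E'"
proof -
  obtain u where u: "u \<in> U" using U(2) by blast
  let ?F = "E' - {e}"
  define V'' where "V'' = {v \<in> V'. (adj ?F)\<^sup>*\<^sup>* u v}"
  define E'' where "E'' = {f \<in> ?F. f \<subseteq> V''}"
  have uV: "u \<in> V'" and FV: "\<forall>f\<in>?F. f \<subseteq> V'" and EE: "E' \<subseteq> E"
    using u sub unfolding steiner_subgraph_def by blast+
  have reach_U: "(adj ?F)\<^sup>*\<^sup>* u x" if "x \<in> U" for x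
  proof (rule tree_walk_avoids_nonseparating_edge[OF tree e(1) EE])
    show "u \<in> {1..n}" "x \<in> {1..n}" using u that U by auto
    show "u \<in> compA n E e \<longleftrightarrow> x \<in> compA n E e"
      using e EE u that unfolding separating_edges_def by blast
    show "(adj E')\<^sup>*\<^sup>* u x"
      using sub u that unfolding steiner_subgraph_def connected_graph_def by blast
  qed
  have reach_V'': "(adj E'')\<^sup>*\<^sup>* u x" if "x \<in> V''" for x
    using rtranclp_adj_component[OF _ FV uV, of x] that unfolding E''_def V''_def by simp
  have "connected_graph V'' E''"
    unfolding connected_graph_def
  proof (intro ballI)
    fix x y assume "x \<in> V''" "y \<in> V''"
    then have "(adj E'')\<^sup>*\<^sup>* x u" "(adj E'')\<^sup>*\<^sup>* u y"
      using reach_V'' rtranclp_adj_sym by blast+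
    then show "(adj E'')\<^sup>*\<^sup>* x y" by (rule rtranclp_trans)
  qed
  moreover have "U \<subseteq> V''" "V'' \<subseteq> {1..n}"
    using sub reach_U unfolding steiner_subgraph_def V''_def by blast+
  ultimately have "steiner_subgraph n E U E'' V''"
    using EE unfolding steiner_subgraph_def E''_def by blast
  moreover have "card E'' < card E'"
  proof -
    have "card E'' \<le> card ?F" unfolding E''_def using fin by (intro card_mono) auto
    also have "\<dots> < card E'" using fin e(1) by (rule card_Diff1_less)
    finally show ?thesis .
  qed
  ultimately show ?thesis by (rule that)
qed

lemma tree_steiner_dist_eq_card_separating_edges:
  assumes tree: "is_tree n E" and U: "U \<subseteq> {1..n}" "U \<noteq> {}"
  shows "steiner_dist n E U = card (separating_edges n E U)"
proof -
  have finE: "finite E" using tree by (rule tree_finite_edges)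
  define S where "S = {card E' | E' V'. steiner_subgraph n E U E' V'}"
  have dist: "steiner_dist n E U = Min S"
    unfolding S_def steiner_dist_def steiner_subgraph_def by simp
  have "S \<subseteq> {0..card E}"
    unfolding S_def steiner_subgraph_def using finE card_mono by fastforce
  then have finS: "finite S" by (rule finite_subset) simp
  have "steiner_subgraph n E U E {1..n}"
    using tree U unfolding steiner_subgraph_def is_tree_def by auto
  then have "Min S \<in> S"
    using finS Min_in unfolding S_def by blast
  then obtain E' V' where sub: "steiner_subgraph n E U E' V'" and min: "card E' = Min S"
    unfolding S_def by auto
  have finE': "finite E'"
    using sub finE finite_subset unfolding steiner_subgraph_def by blast
  have "E' \<subseteq> separating_edges n E U"
  proof
    fix e assume "e \<in> E'"
    show "e \<in> separating_edges n E U"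
    proof (rule ccontr)
      assume "e \<notin> separating_edges n E U"
      then obtain E'' V'' where "steiner_subgraph n E U E'' V''" "card E'' < card E'"
        using tree_steiner_subgraph_prune[OF tree U sub \<open>e \<in> E'\<close> _ finE'] by blast
      then have "Min S \<le> card E''"
        using finS Min_le unfolding S_def by blast
      with \<open>card E'' < card E'\<close> min show False by simp
    qed
  qed
  with steiner_subgraph_contains_separating_edges[OF U(1) sub] have "E' = separating_edges n E U" by blast
  with dist min show ?thesis by simp
qed

lemma tree_steiner_dist_eq_sum_separating:
  assumes "is_tree n E" "U \<subseteq> {1..n}" "U \<noteq> {}"
  shows "real (steiner_dist n E U)
    = (\<Sum>e\<in>E. if U \<inter> compA n E e \<noteq> {} \<and> \<not> U \<subseteq> compA n E e then 1 else 0)"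
proof -
  have "real (steiner_dist n E U)
      = (\<Sum>e\<in>{e \<in> E. U \<inter> compA n E e \<noteq> {} \<and> \<not> U \<subseteq> compA n E e}. 1)"
    using tree_steiner_dist_eq_card_separating_edges[OF assms] by (simp add: separating_edges_def)
  then show ?thesis
    using sum.inter_filter[OF tree_finite_edges[OF assms(1)], of "\<lambda>_. 1::real"] by simp
qed

lemma sum_PiE_prod_eq_power:
  fixes c :: "'a \<Rightarrow> 'b::comm_semiring_1"
  assumes "finite S"
  shows "(\<Sum>i\<in>{0..<k} \<rightarrow>\<^sub>E S. \<Prod>j<k. c (i j)) = (\<Sum>v\<in>S. c v) ^ k"
  using prod_sum_PiE[of "{0..<k}" "\<lambda>_. S" "\<lambda>_ v. c v"] assms
  by (simp add: atLeast0LessThan)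

lemma sum_PiE_restrict:
  fixes k :: nat
  assumes "finite V" "A \<subseteq> V"
  shows "(\<Sum>i\<in>{0..<k} \<rightarrow>\<^sub>E V. if i ` {0..<k} \<subseteq> A then f i else 0) = (\<Sum>i\<in>{0..<k} \<rightarrow>\<^sub>E A. f i)"
proof -
  have "{i \<in> {0..<k} \<rightarrow>\<^sub>E V. i ` {0..<k} \<subseteq> A} = {0..<k} \<rightarrow>\<^sub>E A"
    using assms(2) by (auto simp: PiE_def Pi_def)
  moreover have "finite ({0..<k} \<rightarrow>\<^sub>E V)"
    using assms(1) by (intro finite_PiE) auto
  ultimately show ?thesis
    by (simp add: sum.inter_filter[symmetric])
qed

lemma sum_PiE_straddling:
  fixes c :: "'a \<Rightarrow> 'b::comm_ring_1"
  assumes V: "finite V" and A: "A \<subseteq> V" and k: "k > 0"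
  shows "(\<Sum>i\<in>{0..<k} \<rightarrow>\<^sub>E V.
            (if i ` {0..<k} \<inter> A \<noteq> {} \<and> \<not> i ` {0..<k} \<subseteq> A then 1 else 0) * (\<Prod>j<k. c (i j)))
       = (\<Sum>v\<in>V. c v) ^ k - (\<Sum>v\<in>A. c v) ^ k - (\<Sum>v\<in>V - A. c v) ^ k"
proof -
  let ?f = "\<lambda>i. \<Prod>j<k. c (i j)"
  have split: "(if i ` {0..<k} \<inter> A \<noteq> {} \<and> \<not> i ` {0..<k} \<subseteq> A then 1 else 0) * ?f i
      = ?f i - (if i ` {0..<k} \<subseteq> A then ?f i else 0) - (if i ` {0..<k} \<subseteq> V - A then ?f i else 0)"
    if "i \<in> {0..<k} \<rightarrow>\<^sub>E V" for i
  proof -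
    have "i ` {0..<k} \<noteq> {}" "i ` {0..<k} \<subseteq> V" using k that by auto
    then have "i ` {0..<k} \<subseteq> V - A \<longleftrightarrow> i ` {0..<k} \<inter> A = {}"
      and "\<not> (i ` {0..<k} \<subseteq> A \<and> i ` {0..<k} \<subseteq> V - A)"
      by blast+
    then show ?thesis by auto
  qed
  show ?thesis
    using A V
    by (simp add: split sum_subtractf sum_PiE_restrict sum_PiE_prod_eq_power finite_subset cong: sum.cong)
qed

lemma sum_PiE_straddling_balanced:
  fixes c :: "'a \<Rightarrow> 'b::comm_ring_1"
  assumes "finite V" "A \<subseteq> V" "k > 0" "even k" "(\<Sum>v\<in>V. c v) = 0"
  shows "(\<Sum>i\<in>{0..<k} \<rightarrow>\<^sub>E V.
            (if i ` {0..<k} \<inter> A \<noteq> {} \<and> \<not> i ` {0..<k} \<subseteq> A then 1 else 0) * (\<Prod>j<k. c (i j)))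
       = - 2 * (\<Sum>v\<in>A. c v) ^ k"
proof -
  have "(\<Sum>v\<in>V - A. c v) = - (\<Sum>v\<in>A. c v)"
    using sum.subset_diff[of A V c] assms by (simp add: eq_neg_iff_add_eq_0)
  then show ?thesis
    using sum_PiE_straddling[of V A k c] assms by (simp add: zero_power)
qed

lemma sum_mult_a_prime:
  fixes c :: "nat \<Rightarrow> real"
  assumes "(\<Sum>v=1..n. c v) = 0"
  shows "(\<Sum>v=1..n. c v * a_prime n E e v) = (\<Sum>v\<in>compA n E e. c v)"
proof -
  have "(\<Sum>v=1..n. if v \<in> compA n E e then c v else 0) = (\<Sum>v\<in>compA n E e. c v)"
    using compA_subset by (simp add: sum.inter_restrict[symmetric] Int_absorb1)
  moreover have "c v * a_prime n E e v
      = (if v \<in> compA n E e then c v else 0) - c v * (real (card (compA n E e)) / real n)" for v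
    by (simp add: a_prime_def algebra_simps)
  ultimately show ?thesis
    using assms by (simp add: sum_subtractf sum_divide_distrib[symmetric] sum_distrib_right[symmetric])
qed

theorem mainTheorem2:
  fixes n k :: nat and E :: "nat set set" and c :: "nat \<Rightarrow> real"
  assumes "n \<ge> 2" and "is_tree n E" and "k \<ge> 2" and "even k"
    and "(\<Sum>v=1..n. c v) = 0"
  shows "steiner_form n E k (\<lambda>_. c) =
     - 2 * (\<Sum>e\<in>E. (\<Sum>v=1..n. c v * a_prime n E e v) ^ k)"
proof -
  let ?P = "{0..<k} \<rightarrow>\<^sub>E {1..n}"
  let ?straddles = "\<lambda>i e. i ` {0..<k} \<inter> compA n E e \<noteq> {} \<and> \<not> i ` {0..<k} \<subseteq> compA n E e"
  have dist: "real (steiner_dist n E (i ` {0..<k})) = (\<Sum>e\<in>E. if ?straddles i e then 1 else 0)"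
    if "i \<in> ?P" for i
    using that assms(2,3) by (intro tree_steiner_dist_eq_sum_separating) auto
  have "steiner_form n E k (\<lambda>_. c)
      = (\<Sum>i\<in>?P. \<Sum>e\<in>E. (if ?straddles i e then 1 else 0) * (\<Prod>j<k. c (i j)))"
    unfolding steiner_form_def by (intro sum.cong refl) (simp add: dist sum_distrib_right)
  also have "\<dots> = (\<Sum>e\<in>E. \<Sum>i\<in>?P. (if ?straddles i e then 1 else 0) * (\<Prod>j<k. c (i j)))"
    by (rule sum.swap)
  also have "\<dots> = (\<Sum>e\<in>E. - 2 * (\<Sum>v\<in>compA n E e. c v) ^ k)"
    using assms(3-5) by (intro sum.cong refl sum_PiE_straddling_balanced compA_subset) auto
  also have "\<dots> = - 2 * (\<Sum>e\<in>E. (\<Sum>v=1..n. c v * a_prime n E e v) ^ k)"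
    by (simp only: sum_mult_a_prime[OF assms(5)] sum_distrib_left)
  finally show ?thesis .
qed

end
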